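(* For each $\nu\in\{1,\dots,5\}$ and each $Y$ in the domain of $Z^\nu_1$ (i.e. where $1-y_2z_1$, $z_1+z_3$, $y_2z_3+1$ are all nonzero), the $8\times 20$ Jacobian matrix $\dfrac{\partial Z^\nu_1}{\partial Y}(Y)$ has rank at most $5$.
   Context: Let $Y=(z_1,y_2,z_3,z_4,y_5,p_3,p_4,p_5,q_4,q_5,\kappa_1,\dots,\kappa_5)\in\mathbb R^{20}$, where $z_1,y_2,z_3,z_4,y_5,\kappa_1,\dots,\kappa_5\in\mathbb R$ and $p_3,p_4,p_5,q_4,q_5\in\mathbb R^2$. Set $\delta^0=(1,1)$, $\alpha_1=(-1,z_1)$, $\alpha_2=(y_2,-1)$, $\alpha_3=(1,z_3)$, $\alpha_4=(1,z_4)$, $\alpha_5=(y_5,1)$, and define $p_1=\frac{y_2z_3+1}{1-y_2z_1}p_3+\frac{y_2z_4+1}{1-y_2z_1}p_4+\frac{y_2+y_5}{1-y_2z_1}p_5$, $p_2=\frac{z_1+z_3}{1-y_2z_1}p_3+\frac{z_1+z_4}{1-y_2z_1}p_4+\frac{y_5z_1+1}{1-y_2z_1}p_5$, $q_1=\frac{(y_2z_4+1)(z_3-z_4)}{(z_1+z_3)(y_2z_1-1)}q_4+\frac{(y_2+y_5)(y_5z_3-1)}{(z_1+z_3)(y_2z_1-1)}q_5$, $q_2=-\frac{(z_1+z_4)(z_3-z_4)}{(y_2z_1-1)(y_2z_3+1)}q_4-\frac{(y_5z_1+1)(y_5z_3-1)}{(y_2z_1-1)(y_2z_3+1)}q_5$,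 $q_3=-\frac{(z_1+z_4)(y_2z_4+1)}{(z_1+z_3)(y_2z_3+1)}q_4-\frac{(y_2+y_5)(y_5z_1+1)}{(z_1+z_3)(y_2z_3+1)}q_5$. For $j=1,\dots,5$ let $C_j(Y)=\begin{pmatrix}p_j\\ (\alpha_j\cdot\delta^0)q_j\end{pmatrix}\otimes\alpha_j\in\mathbb M^{4\times 2}$, and $Z^\nu_1(Y)=\kappa_\nu C_\nu(Y)$. The space $\mathbb M^{4\times 2}$ is identified with $\mathbb R^8$ by stacking columns: $(x_{ik})\mapsto(x_{11},x_{21},x_{31},x_{41},x_{12},x_{22},x_{32},x_{42})$. *)

theory Defs
  imports "HOL-Analysis.Analysis" "HOL-Library.Numeral_Type"
begin

definition z1 :: "real^20 \<Rightarrow> real" where "z1 Y = Y $ 0"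
definition y2 :: "real^20 \<Rightarrow> real" where "y2 Y = Y $ 1"
definition z3 :: "real^20 \<Rightarrow> real" where "z3 Y = Y $ 2"
definition z4 :: "real^20 \<Rightarrow> real" where "z4 Y = Y $ 3"
definition y5 :: "real^20 \<Rightarrow> real" where "y5 Y = Y $ 4"
definition p3 :: "real^20 \<Rightarrow> real \<times> real" where "p3 Y = (Y $ 5, Y $ 6)"
definition p4 :: "real^20 \<Rightarrow> real \<times> real" where "p4 Y = (Y $ 7, Y $ 8)"
definition p5 :: "real^20 \<Rightarrow> real \<times> real" where "p5 Y = (Y $ 9, Y $ 10)"
definition q4 :: "real^20 \<Rightarrow> real \<times> real" where "q4 Y = (Y $ 11, Y $ 12)"
definition q5 :: "real^20 \<Rightarrow> real \<times> real" where "q5 Y = (Y $ 13, Y $ 14)"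

definition kappa :: "nat \<Rightarrow> real^20 \<Rightarrow> real" where
  "kappa j Y = (if j = 1 then Y $ 15 else if j = 2 then Y $ 16 else if j = 3 then Y $ 17
                else if j = 4 then Y $ 18 else Y $ 19)"

definition alpha :: "nat \<Rightarrow> real^20 \<Rightarrow> real \<times> real" where
  "alpha j Y = (if j = 1 then (-1, z1 Y) else if j = 2 then (y2 Y, -1)
                else if j = 3 then (1, z3 Y) else if j = 4 then (1, z4 Y) else (y5 Y, 1))"

definition delta0 :: "real \<times> real" where "delta0 = (1, 1)"

definition pp :: "nat \<Rightarrow> real^20 \<Rightarrow> real \<times> real" where
  "pp j Y = (let a = z1 Y; b = y2 Y; c = z3 Y; d = z4 Y; e = y5 Y in
    if j = 1 then ((b*c+1)/(1-b*a)) *\<^sub>R p3 Y + ((b*d+1)/(1-b*a)) *\<^sub>R p4 Y + ((b+e)/(1-b*a)) *\<^sub>R p5 Y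
    else if j = 2 then ((a+c)/(1-b*a)) *\<^sub>R p3 Y + ((a+d)/(1-b*a)) *\<^sub>R p4 Y + ((e*a+1)/(1-b*a)) *\<^sub>R p5 Y
    else if j = 3 then p3 Y else if j = 4 then p4 Y else p5 Y)"

definition qq :: "nat \<Rightarrow> real^20 \<Rightarrow> real \<times> real" where
  "qq j Y = (let a = z1 Y; b = y2 Y; c = z3 Y; d = z4 Y; e = y5 Y in
    if j = 1 then ((b*d+1)*(c-d)/((a+c)*(b*a-1))) *\<^sub>R q4 Y + ((b+e)*(e*c-1)/((a+c)*(b*a-1))) *\<^sub>R q5 Y
    else if j = 2 then (-((a+d)*(c-d)/((b*a-1)*(b*c+1)))) *\<^sub>R q4 Y
                     + (-((e*a+1)*(e*c-1)/((b*a-1)*(b*c+1)))) *\<^sub>R q5 Y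
    else if j = 3 then (-((a+d)*(b*d+1)/((a+c)*(b*c+1)))) *\<^sub>R q4 Y
                     + (-((b+e)*(e*a+1)/((a+c)*(b*c+1)))) *\<^sub>R q5 Y
    else if j = 4 then q4 Y else q5 Y)"

definition colv :: "nat \<Rightarrow> real^20 \<Rightarrow> nat \<Rightarrow> real" where
  "colv j Y i = (let s = alpha j Y \<bullet> delta0 in
     if i = 0 then fst (pp j Y) else if i = 1 then snd (pp j Y)
     else if i = 2 then s * fst (qq j Y) else s * snd (qq j Y))"

text \<open>C_j(Y) = colv \<otimes> alpha_j, a 4x2 matrix, stacked by columns into R^8
  (indices 0..7: entries (1,1),(2,1),(3,1),(4,1),(1,2),(2,2),(3,2),(4,2)).\<close>
definition Cmat :: "nat \<Rightarrow> real^20 \<Rightarrow> real^8" where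
  "Cmat j Y = (\<chi> k::8. if k = 0 then colv j Y 0 * fst (alpha j Y)
     else if k = 1 then colv j Y 1 * fst (alpha j Y)
     else if k = 2 then colv j Y 2 * fst (alpha j Y)
     else if k = 3 then colv j Y 3 * fst (alpha j Y)
     else if k = 4 then colv j Y 0 * snd (alpha j Y)
     else if k = 5 then colv j Y 1 * snd (alpha j Y)
     else if k = 6 then colv j Y 2 * snd (alpha j Y)
     else colv j Y 3 * snd (alpha j Y))"

definition Z1 :: "nat \<Rightarrow> real^20 \<Rightarrow> real^8" where
  "Z1 \<nu> Y = kappa \<nu> Y *\<^sub>R Cmat \<nu> Y"

definition in_domain :: "real^20 \<Rightarrow> bool" where
  "in_domain Y \<longleftrightarrow> 1 - y2 Y * z1 Y \<noteq> 0 \<and> z1 Y + z3 Y \<noteq> 0 \<and> y2 Y * z3 Y + 1 \<noteq> 0"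

end

theory Submission
  imports Defs
begin

text \<open>\<open>Z\<^sup>\<nu>\<^sub>1 = v \<otimes> \<alpha>\<^sub>\<nu>\<close> with \<open>v = \<kappa>\<^sub>\<nu> (p\<^sub>\<nu>; (\<alpha>\<^sub>\<nu>\<cdot>\<delta>\<^sup>0) q\<^sub>\<nu>)\<close> differentiable on the
  domain, so the derivative is \<open>dv \<otimes> \<alpha>\<^sub>\<nu> + v \<otimes> d\<alpha>\<^sub>\<nu>\<close>. The first summand ranges over
  the 4-dimensional space \<open>\<real>\<^sup>4 \<otimes> \<alpha>\<^sub>\<nu>\<close>. One entry of \<open>\<alpha>\<^sub>\<nu>\<close> is the constant \<open>\<plusminus>1\<close>,
  so \<open>d\<alpha>\<^sub>\<nu>\<close> points along a fixed coordinate axis and the second summand ranges over a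
  line. Hence the rank is at most \<open>4 + 1\<close>.\<close>

lemma differentiable_vec_nth [simp]: "(\<lambda>x::real^'n. x $ i) differentiable F"
  by (rule bounded_linear_imp_differentiable) (rule bounded_linear_vec_nth)

lemma has_derivative_vec_lambda:
  fixes f :: "'n::finite \<Rightarrow> 'a::real_normed_vector \<Rightarrow> real"
  assumes "\<And>k. (f k has_derivative f' k) F"
  shows "((\<lambda>x. \<chi> k. f k x) has_derivative (\<lambda>h. \<chi> k. f' k h)) F"
proof -
  have expand: "(\<chi> k. u k) = (\<Sum>k\<in>UNIV. u k *\<^sub>R axis k 1)" for u :: "'n \<Rightarrow> real"
    using basis_expansion[of "\<chi> k. u k"] by (simp add: scalar_mult_eq_scaleR)
  have "((\<lambda>x. \<Sum>k\<in>UNIV. f k x *\<^sub>R axis k 1) has_derivative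
        (\<lambda>h. \<Sum>k\<in>UNIV. f' k h *\<^sub>R (axis k 1 :: real^'n))) F"
    by (intro has_derivative_sum has_derivative_scaleR_left assms)
  then show ?thesis
    by (simp only: expand)
qed

lemma has_derivative_vec_lambda_mult:
  fixes g :: "'i \<Rightarrow> 'a::real_normed_vector \<Rightarrow> real" and b :: "'j \<Rightarrow> 'a \<Rightarrow> real"
  assumes "\<And>i. (g i has_derivative G i) (at y)" and "\<And>j. (b j has_derivative B j) (at y)"
  shows "((\<lambda>x. \<chi> k::'n::finite. g (c k) x * b (r k) x) has_derivative
          (\<lambda>h. \<chi> k. G (c k) h * b (r k) y + g (c k) y * B (r k) h)) (at y)"
proof (rule has_derivative_vec_lambda)
  fix k
  show "((\<lambda>x. g (c k) x * b (r k) x) has_derivative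
          (\<lambda>h. G (c k) h * b (r k) y + g (c k) y * B (r k) h)) (at y)"
    using has_derivative_mult[OF assms(1)[of "c k"] assms(2)[of "r k"]]
    by (simp add: algebra_simps)
qed

lemma dim_range_outer_derivative_le:
  fixes G :: "'i \<Rightarrow> 'a::real_vector \<Rightarrow> real" and B :: "'j \<Rightarrow> 'a \<Rightarrow> real"
  assumes "finite I" and "\<And>k. c k \<in> I" and "\<And>j. j \<noteq> j' \<Longrightarrow> B j = (\<lambda>h. 0)"
  shows "dim (range (\<lambda>h. \<chi> k::'n::finite. G (c k) h * \<beta> (r k) + \<gamma> (c k) * B (r k) h))
           \<le> card I + 1"
proof -
  define u :: "'i \<Rightarrow> real^'n" where "u i = (\<chi> k. if c k = i then \<beta> (r k) else 0)" for i
  define w :: "real^'n" where "w = (\<chi> k. if r k = j' then \<gamma> (c k) else 0)"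
  have decomp: "(\<chi> k. G (c k) h * \<beta> (r k) + \<gamma> (c k) * B (r k) h)
                  = (\<Sum>i\<in>I. G i h *\<^sub>R u i) + B j' h *\<^sub>R w" for h
    unfolding vec_eq_iff
  proof
    fix k
    have "(\<Sum>i\<in>I. G i h * (u i $ k)) = G (c k) h * \<beta> (r k)"
      using assms(1,2) by (simp add: u_def if_distrib[of "(*) _"] sum.delta cong: if_cong)
    moreover have "\<gamma> (c k) * B (r k) h = B j' h * (w $ k)"
      using assms(3)[of "r k"] by (auto simp: w_def)
    ultimately show "(\<chi> k. G (c k) h * \<beta> (r k) + \<gamma> (c k) * B (r k) h) $ k
                       = ((\<Sum>i\<in>I. G i h *\<^sub>R u i) + B j' h *\<^sub>R w) $ k"
      by (simp add: sum_component)
  qed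
  have "range (\<lambda>h. \<chi> k. G (c k) h * \<beta> (r k) + \<gamma> (c k) * B (r k) h) \<subseteq> span (u ` I \<union> {w})"
  proof (rule image_subsetI)
    fix h
    have "(\<Sum>i\<in>I. G i h *\<^sub>R u i) \<in> span (u ` I \<union> {w})"
      by (intro span_sum span_mul) (simp add: span_base)
    moreover have "B j' h *\<^sub>R w \<in> span (u ` I \<union> {w})"
      by (intro span_mul) (simp add: span_base)
    ultimately show "(\<chi> k. G (c k) h * \<beta> (r k) + \<gamma> (c k) * B (r k) h) \<in> span (u ` I \<union> {w})"
      unfolding decomp by (rule span_add)
  qed
  then have "dim (range (\<lambda>h. \<chi> k. G (c k) h * \<beta> (r k) + \<gamma> (c k) * B (r k) h))
               \<le> card (u ` I \<union> {w})"
    using assms(1) by (intro dim_le_card) auto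
  also have "\<dots> \<le> card I + 1"
    using assms(1) card_Un_le[of "u ` I" "{w}"] card_image_le[of I u] by simp
  finally show ?thesis .
qed

lemma rank_matrix_eq_dim_range:
  fixes f :: "real^'m \<Rightarrow> real^'n"
  assumes "linear f"
  shows "rank (matrix f) = dim (range f)"
  using rank_dim_range[of "matrix f"] matrix_vector_mul(2)[OF assms] by simp

definition stack_row :: "8 \<Rightarrow> nat" where
  "stack_row k = (if k = 0 \<or> k = 4 then 0 else if k = 1 \<or> k = 5 then 1
                  else if k = 2 \<or> k = 6 then 2 else 3)"

definition in_first_column :: "8 \<Rightarrow> bool" where
  "in_first_column k \<longleftrightarrow> k \<in> {0, 1, 2, 3}"

definition alpha_entry :: "bool \<Rightarrow> nat \<Rightarrow> real^20 \<Rightarrow> real" where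
  "alpha_entry first \<nu> Y = (if first then fst (alpha \<nu> Y) else snd (alpha \<nu> Y))"

lemma exhaust_8:
  fixes k :: 8
  obtains "k = 0" | "k = 1" | "k = 2" | "k = 3" | "k = 4" | "k = 5" | "k = 6" | "k = 7"
proof (induct k)
  case (of_int z)
  then have "0 \<le> z" "z < 8"
    by simp_all
  then have "z = 0 \<or> z = 1 \<or> z = 2 \<or> z = 3 \<or> z = 4 \<or> z = 5 \<or> z = 6 \<or> z = 7"
    by presburger
  with of_int show ?case
    by auto
qed

lemma Z1_eq_outer_product:
  "Z1 \<nu> = (\<lambda>Y. \<chi> k. (kappa \<nu> Y * colv \<nu> Y (stack_row k)) * alpha_entry (in_first_column k) \<nu> Y)"
proof (intro ext vec_eq_iff[THEN iffD2] allI)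
  fix Y and k :: 8
  show "Z1 \<nu> Y $ k = (\<chi> k. (kappa \<nu> Y * colv \<nu> Y (stack_row k)) * alpha_entry (in_first_column k) \<nu> Y) $ k"
    by (cases k rule: exhaust_8)
      (simp_all add: Z1_def Cmat_def stack_row_def in_first_column_def alpha_entry_def)
qed

lemma alpha_entry_constant: "\<exists>first c. alpha_entry first \<nu> = (\<lambda>Y. c)"
proof -
  consider "\<nu> = 1" | "\<nu> = 2" | "\<nu> = 3 \<or> \<nu> = 4" | "\<nu> \<notin> {1, 2, 3, 4}"
    by blast
  then show ?thesis
  proof cases
    case 1
    then have "alpha_entry True \<nu> = (\<lambda>Y. -1)"
      by (simp add: alpha_entry_def alpha_def fun_eq_iff)
    then show ?thesis by blast
  next
    case 2
    then have "alpha_entry False \<nu> = (\<lambda>Y. -1)"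
      by (simp add: alpha_entry_def alpha_def fun_eq_iff)
    then show ?thesis by blast
  next
    case 3
    then have "alpha_entry True \<nu> = (\<lambda>Y. 1)"
      by (auto simp: alpha_entry_def alpha_def fun_eq_iff)
    then show ?thesis by blast
  next
    case 4
    then have "alpha_entry False \<nu> = (\<lambda>Y. 1)"
      by (simp add: alpha_entry_def alpha_def fun_eq_iff)
    then show ?thesis by blast
  qed
qed

lemma alpha_entry_differentiable: "alpha_entry first \<nu> differentiable (at Y)"
  unfolding alpha_entry_def alpha_def z1_def y2_def z3_def z4_def y5_def
  by (cases first; cases "\<nu> = 1"; cases "\<nu> = 2"; cases "\<nu> = 3"; cases "\<nu> = 4") simp_all

lemma kappa_differentiable: "kappa \<nu> differentiable (at Y)"
  unfolding kappa_def
  by (cases "\<nu> = 1"; cases "\<nu> = 2"; cases "\<nu> = 3"; cases "\<nu> = 4") simp_all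

lemma colv_differentiable:
  assumes "in_domain Y"
  shows "(\<lambda>Y'. colv \<nu> Y' i) differentiable (at Y)"
proof -
  have "1 - Y$1 * Y$0 \<noteq> 0" "Y$0 + Y$2 \<noteq> 0" "Y$1 * Y$2 + 1 \<noteq> 0" "Y$1 * Y$0 - 1 \<noteq> 0"
    using assms by (auto simp: in_domain_def z1_def y2_def z3_def)
  moreover have "\<nu> = 1 \<or> \<nu> = 2 \<or> \<nu> = 3 \<or> \<nu> = 4 \<or> \<nu> \<notin> {1, 2, 3, 4}"
    by blast
  moreover have "i = 0 \<or> i = 1 \<or> i = 2 \<or> i \<notin> {0, 1, 2}"
    by blast
  ultimately show ?thesis
    by (elim disjE; simp add: colv_def pp_def qq_def alpha_def Let_def delta0_def
        p3_def p4_def p5_def q4_def q5_def z1_def y2_def z3_def z4_def y5_def)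
qed

theorem lemma3p2:
  fixes \<nu> :: nat and Y :: "real^20"
  assumes "\<nu> \<in> {1..5}" and "in_domain Y"
  shows "Z1 \<nu> differentiable (at Y)
    \<and> rank (matrix (frechet_derivative (Z1 \<nu>) (at Y))) \<le> 5"
proof -
  define g where "g i = (\<lambda>Y'. kappa \<nu> Y' * colv \<nu> Y' i)" for i
  define b where "b first = alpha_entry first \<nu>" for first
  define D where "D = (\<lambda>h. \<chi> k. frechet_derivative (g (stack_row k)) (at Y) h * b (in_first_column k) Y
                          + g (stack_row k) Y * frechet_derivative (b (in_first_column k)) (at Y) h)"
  have Z1_eq: "Z1 \<nu> = (\<lambda>Y. \<chi> k. g (stack_row k) Y * b (in_first_column k) Y)"
    unfolding Z1_eq_outer_product g_def b_def ..
  have "g i differentiable (at Y)" for i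
    unfolding g_def using kappa_differentiable colv_differentiable[OF assms(2)]
    by (rule differentiable_mult)
  moreover have "b first differentiable (at Y)" for first
    unfolding b_def by (rule alpha_entry_differentiable)
  ultimately have DZ: "(Z1 \<nu> has_derivative D) (at Y)"
    unfolding Z1_eq D_def frechet_derivative_works by (rule has_derivative_vec_lambda_mult)
  obtain first c where "b first = (\<lambda>Y. c)"
    using alpha_entry_constant unfolding b_def by blast
  then have "dim (range D) \<le> card {..<4::nat} + 1"
    unfolding D_def
    by (intro dim_range_outer_derivative_le[where j' = "\<not> first"]) (auto simp: stack_row_def)
  moreover have "rank (matrix (frechet_derivative (Z1 \<nu>) (at Y))) = dim (range D)"
    using frechet_derivative_at[OF DZ] rank_matrix_eq_dim_range[OF has_derivative_linear[OF DZ]]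
    by simp
  ultimately show ?thesis
    using DZ by (auto simp: differentiable_def)
qed

end
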